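(* Let $G$ be a finite chordal graph. Then every exposed edge of $G$ is contained in a cycle of $G$ all of whose edges are exposed edges of $G$.
   Context: All graphs are finite, undirected, simple. A graph is chordal if every induced cycle has length three. A facet edge of $G$ is an edge $xy$ such that $\{x,y\}$ is a maximal clique of $G$. An edge of $G$ is exposed if it is contained in a unique maximal clique of $G$ and it is not a facet edge. *)

theory Defs
  imports Main
begin

definition simple_graph :: "'a set \<Rightarrow> ('a \<Rightarrow> 'a \<Rightarrow> bool) \<Rightarrow> bool" where
  "simple_graph V E \<longleftrightarrow> finite V \<and> (\<forall>x y. E x y \<longrightarrow> x \<in> V \<and> y \<in> V)
     \<and> (\<forall>x y. E x y \<longrightarrow> E y x) \<and> (\<forall>x. \<not> E x x)"

definition is_cycle :: "'a set \<Rightarrow> ('a \<Rightarrow> 'a \<Rightarrow> bool) \<Rightarrow> 'a list \<Rightarrow> bool" where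
  "is_cycle V E cs \<longleftrightarrow> length cs \<ge> 3 \<and> distinct cs \<and> set cs \<subseteq> V
     \<and> (\<forall>i < length cs. E (cs ! i) (cs ! ((i + 1) mod length cs)))"

definition cycle_edge :: "'a list \<Rightarrow> 'a \<Rightarrow> 'a \<Rightarrow> bool" where
  "cycle_edge cs x y \<longleftrightarrow>
     (\<exists>i < length cs. {x, y} = {cs ! i, cs ! ((i + 1) mod length cs)})"

definition induced_cycle :: "'a set \<Rightarrow> ('a \<Rightarrow> 'a \<Rightarrow> bool) \<Rightarrow> 'a list \<Rightarrow> bool" where
  "induced_cycle V E cs \<longleftrightarrow> is_cycle V E cs
     \<and> (\<forall>i < length cs. \<forall>j < length cs. E (cs ! i) (cs ! j) \<longrightarrow> cycle_edge cs (cs ! i) (cs ! j))"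

definition chordal :: "'a set \<Rightarrow> ('a \<Rightarrow> 'a \<Rightarrow> bool) \<Rightarrow> bool" where
  "chordal V E \<longleftrightarrow> (\<forall>cs. induced_cycle V E cs \<longrightarrow> length cs = 3)"

definition clique :: "'a set \<Rightarrow> ('a \<Rightarrow> 'a \<Rightarrow> bool) \<Rightarrow> 'a set \<Rightarrow> bool" where
  "clique V E C \<longleftrightarrow> C \<subseteq> V \<and> (\<forall>x\<in>C. \<forall>y\<in>C. x \<noteq> y \<longrightarrow> E x y)"

definition maximal_clique :: "'a set \<Rightarrow> ('a \<Rightarrow> 'a \<Rightarrow> bool) \<Rightarrow> 'a set \<Rightarrow> bool" where
  "maximal_clique V E C \<longleftrightarrow> clique V E C \<and> (\<forall>D. clique V E D \<and> C \<subseteq> D \<longrightarrow> D = C)"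

definition facet_edge :: "'a set \<Rightarrow> ('a \<Rightarrow> 'a \<Rightarrow> bool) \<Rightarrow> 'a \<Rightarrow> 'a \<Rightarrow> bool" where
  "facet_edge V E x y \<longleftrightarrow> E x y \<and> maximal_clique V E {x, y}"

definition exposed_edge :: "'a set \<Rightarrow> ('a \<Rightarrow> 'a \<Rightarrow> bool) \<Rightarrow> 'a \<Rightarrow> 'a \<Rightarrow> bool" where
  "exposed_edge V E x y \<longleftrightarrow> E x y
     \<and> (\<exists>!C. maximal_clique V E C \<and> {x, y} \<subseteq> C)
     \<and> \<not> facet_edge V E x y"

end

theory Submission
  imports Defs
begin

text \<open>
  Edges at a simplicial vertex (one whose neighbourhood is a clique) of degree at least two are
  exposed, and by Dirac's lemma a chordal graph that is not complete has two non-adjacent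
  simplicial vertices. So an exposed edge \<open>xy\<close>, which lies in a triangle, misses some simplicial
  vertex \<open>v\<close>. Deleting \<open>v\<close> does not affect exposedness of edges that do not form a triangle
  with \<open>v\<close>, and an edge of such a triangle crossing a vertex set \<open>S\<close> yields an exposed edge at
  \<open>v\<close> crossing \<open>S\<close>. By induction on the number of vertices, every \<open>S\<close> containing \<open>x\<close> but not
  \<open>y\<close> is crossed by an exposed edge other than \<open>xy\<close>. Hence \<open>x\<close> and \<open>y\<close> are joined by a path of
  exposed edges avoiding \<open>xy\<close>, and a shortest one, closed up by \<open>xy\<close>, is the required cycle.
\<close>

lemma
  assumes "simple_graph V E"
  shows simple_graph_sym: "E p q \<Longrightarrow> E q p"
    and simple_graph_irrefl: "\<not> E p p"
    and simple_graph_edge_in: "E p q \<Longrightarrow> p \<in> V \<and> q \<in> V"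
    and simple_graph_finite: "finite V"
  using assms unfolding simple_graph_def by blast+

definition walk :: "('a \<Rightarrow> 'a \<Rightarrow> bool) \<Rightarrow> nat \<Rightarrow> (nat \<Rightarrow> 'a) \<Rightarrow> bool" where
  "walk r n f \<longleftrightarrow> (\<forall>i<n. r (f i) (f (Suc i)))"

lemma rtranclp_imp_walk:
  assumes "r\<^sup>*\<^sup>* a b"
  shows "\<exists>n f. f 0 = a \<and> f n = b \<and> walk r n f"
  using assms
proof (induction rule: rtranclp_induct)
  case base
  have "walk r 0 (\<lambda>_. a)" by (simp add: walk_def)
  then show ?case by (intro exI[of _ 0] exI[of _ "\<lambda>_. a"]) simp
next
  case (step b c)
  then obtain n f where "f 0 = a" "f n = b" "walk r n f" by blast
  with step.hyps(2) have "walk r (Suc n) (f(Suc n := c))"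
    unfolding walk_def by (auto simp: less_Suc_eq)
  moreover have "(f(Suc n := c)) 0 = a" "(f(Suc n := c)) (Suc n) = c" using \<open>f 0 = a\<close> by simp_all
  ultimately show ?case by blast
qed

lemma walk_skip:
  assumes "walk r n f" "i < j" "j \<le> n" "r (f i) (f j)"
  shows "walk r (n - (j - Suc i)) (\<lambda>k. if k \<le> i then f k else f (k + (j - Suc i)))"
  unfolding walk_def
proof (intro allI impI)
  fix k assume k: "k < n - (j - Suc i)"
  consider "k < i" | "k = i" | "i < k" by linarith
  then show "r (if k \<le> i then f k else f (k + (j - Suc i)))
              (if Suc k \<le> i then f (Suc k) else f (Suc k + (j - Suc i)))"
  proof cases
    case 1
    with assms(1) k show ?thesis unfolding walk_def by auto
  next
    case 2
    with assms(2,4) show ?thesis by auto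
  next
    case 3
    with assms(1,2) k have "r (f (k + (j - Suc i))) (f (Suc (k + (j - Suc i))))"
      unfolding walk_def by auto
    with 3 show ?thesis by auto
  qed
qed

lemma walk_mono: "walk r n f \<Longrightarrow> (\<And>p q. r p q \<Longrightarrow> s p q) \<Longrightarrow> walk s n f"
  unfolding walk_def by blast

lemma shortest_walk:
  assumes "r\<^sup>*\<^sup>* a b"
  obtains n f where "f 0 = a" "f n = b" "walk r n f" "inj_on f {..n}"
    "\<And>i j. i < j \<Longrightarrow> j \<le> n \<Longrightarrow> r (f i) (f j) \<Longrightarrow> j = Suc i"
proof -
  define P where "P n \<longleftrightarrow> (\<exists>f. f 0 = a \<and> f n = b \<and> walk r n f)" for n
  have "\<exists>n. P n" using rtranclp_imp_walk[OF assms] unfolding P_def .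
  then obtain n where "P n" and shortest: "\<And>m. m < n \<Longrightarrow> \<not> P m"
    by (metis exists_least_iff)
  then obtain f where f: "f 0 = a" "f n = b" "walk r n f" unfolding P_def by blast
  have no_skip: "j = Suc i" if "i < j" "j \<le> n" "r (f i) (f j)" for i j
  proof (rule ccontr)
    assume "j \<noteq> Suc i"
    let ?g = "\<lambda>k. if k \<le> i then f k else f (k + (j - Suc i))"
    have "?g 0 = a" "?g (n - (j - Suc i)) = b" using f that by auto
    with walk_skip[OF f(3) that] have "P (n - (j - Suc i))" unfolding P_def by (intro exI[of _ ?g]) simp
    with shortest \<open>j \<noteq> Suc i\<close> that show False by simp
  qed
  have "i = j" if "i \<le> n" "j \<le> n" "f i = f j" "i \<le> j" for i j
  proof (rule ccontr)
    assume "i \<noteq> j"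
    show False
    proof (cases "j < n")
      case True
      with f(3) that have "r (f i) (f (Suc j))" by (simp add: walk_def)
      with no_skip[of i "Suc j"] \<open>i \<noteq> j\<close> that True show False by simp
    next
      case False
      with f that have "P i" unfolding P_def walk_def by auto
      with shortest \<open>i \<noteq> j\<close> that False show False by simp
    qed
  qed
  then have "inj_on f {..n}" unfolding inj_on_def by (metis atMost_iff nat_le_linear)
  with f no_skip show ?thesis using that by blast
qed

lemma nth_map_upt_Suc_0: "i < Suc n \<Longrightarrow> map f [0..<Suc n] ! i = f i"
  by (simp add: nth_map_upt del: upt_Suc)

lemma ex_less_Suc_cyclic:
  "(\<exists>i<Suc n. P i ((i + 1) mod Suc n)) \<longleftrightarrow> (\<exists>i<n. P i (Suc i)) \<or> P n 0"
  unfolding less_Suc_eq by auto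

lemma all_less_Suc_cyclic:
  "(\<forall>i<Suc n. P i ((i + 1) mod Suc n)) \<longleftrightarrow> (\<forall>i<n. P i (Suc i)) \<and> P n 0"
  unfolding less_Suc_eq by auto

lemma cycle_edge_map_upt:
  "cycle_edge (map f [0..<Suc n]) u v \<longleftrightarrow>
     (\<exists>i<n. {u, v} = {f i, f (Suc i)}) \<or> {u, v} = {f n, f 0}"
  unfolding cycle_edge_def length_map length_upt diff_zero
    ex_less_Suc_cyclic[where P = "\<lambda>i j. {u, v} = {map f [0..<Suc n] ! i, map f [0..<Suc n] ! j}"]
  by (auto simp: nth_map_upt_Suc_0 simp del: upt_Suc)

lemma is_cycle_map_upt:
  "is_cycle V E (map f [0..<Suc n]) \<longleftrightarrow>
     2 \<le> n \<and> inj_on f {..n} \<and> f ` {..n} \<subseteq> V \<and> walk E n f \<and> E (f n) (f 0)"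
proof -
  have "{0..<Suc n} = {..n}" by auto
  then show ?thesis
    unfolding is_cycle_def length_map length_upt diff_zero walk_def
      all_less_Suc_cyclic[where P = "\<lambda>i j. E (map f [0..<Suc n] ! i) (map f [0..<Suc n] ! j)"]
    by (auto simp: distinct_map nth_map_upt_Suc_0 simp del: upt_Suc)
qed

lemma is_cycle_map_upt_intro:
  assumes "simple_graph V E" "walk E n f" "2 \<le> n" "inj_on f {..n}" "E (f n) (f 0)"
  shows "is_cycle V E (map f [0..<Suc n])"
proof -
  have "f k \<in> V" if "k \<le> n" for k
  proof (cases "k < n")
    case True
    with assms(2) have "E (f k) (f (Suc k))" unfolding walk_def by blast
    then show ?thesis using simple_graph_edge_in[OF assms(1)] by blast
  next
    case False
    with that assms(5) show ?thesis using simple_graph_edge_in[OF assms(1)] by simp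
  qed
  with assms(2-5) show ?thesis unfolding is_cycle_map_upt by blast
qed

lemma cycle_edge_map_upt_imp:
  assumes "walk r n f" "r (f n) (f 0)" "symp r" "cycle_edge (map f [0..<Suc n]) u v"
  shows "r u v"
  using assms(4) unfolding cycle_edge_map_upt
proof
  assume "\<exists>i<n. {u, v} = {f i, f (Suc i)}"
  then obtain i where "i < n" "u = f i \<and> v = f (Suc i) \<or> u = f (Suc i) \<and> v = f i"
    by (auto simp: doubleton_eq_iff)
  with assms(1,3) show ?thesis unfolding walk_def by (auto dest: sympD)
next
  assume "{u, v} = {f n, f 0}"
  then have "u = f n \<and> v = f 0 \<or> u = f 0 \<and> v = f n" by (simp add: doubleton_eq_iff)
  with assms(2,3) show ?thesis by (auto dest: sympD)
qed

lemma cycle_edge_commute: "cycle_edge cs u v \<longleftrightarrow> cycle_edge cs v u"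
  unfolding cycle_edge_def by (simp add: insert_commute)

lemma induced_cycle_map_upt:
  assumes "simple_graph V E" "is_cycle V E (map f [0..<Suc n])"
    and chordless: "\<And>i j. i < j \<Longrightarrow> j \<le> n \<Longrightarrow> E (f i) (f j) \<Longrightarrow> j = Suc i \<or> (i = 0 \<and> j = n)"
  shows "induced_cycle V E (map f [0..<Suc n])"
proof -
  have edge: "cycle_edge (map f [0..<Suc n]) (f i) (f j)"
    if "i < j" "j \<le> n" "E (f i) (f j)" for i j
    using chordless[OF that]
  proof
    assume "j = Suc i"
    with that have "i < n" "{f i, f j} = {f i, f (Suc i)}" by auto
    then show ?thesis unfolding cycle_edge_map_upt by blast
  next
    assume "i = 0 \<and> j = n"
    then show ?thesis unfolding cycle_edge_map_upt by (auto simp: insert_commute)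
  qed
  have "cycle_edge (map f [0..<Suc n]) (f i) (f j)"
    if "i \<le> n" "j \<le> n" "E (f i) (f j)" for i j
  proof -
    have "E (f j) (f i)" "i \<noteq> j"
      using that(3) simple_graph_sym[OF assms(1)] simple_graph_irrefl[OF assms(1)] by auto
    then consider "i < j" | "j < i" by linarith
    then show ?thesis
    proof cases
      case 1
      with edge that show ?thesis by blast
    next
      case 2
      with edge[of j i] that \<open>E (f j) (f i)\<close> show ?thesis by (simp add: cycle_edge_commute)
    qed
  qed
  with assms(2) show ?thesis
    unfolding induced_cycle_def by (simp add: nth_map_upt_Suc_0 less_Suc_eq_le del: upt_Suc)
qed

definition induced :: "('a \<Rightarrow> 'a \<Rightarrow> bool) \<Rightarrow> 'a set \<Rightarrow> 'a \<Rightarrow> 'a \<Rightarrow> bool" where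
  "induced E W p q \<longleftrightarrow> E p q \<and> p \<in> W \<and> q \<in> W"

lemma simple_graph_induced: "simple_graph V E \<Longrightarrow> W \<subseteq> V \<Longrightarrow> simple_graph W (induced E W)"
  unfolding simple_graph_def induced_def by (auto intro: finite_subset)

lemma clique_induced_iff: "W \<subseteq> V \<Longrightarrow> clique W (induced E W) C \<longleftrightarrow> clique V E C \<and> C \<subseteq> W"
  unfolding clique_def induced_def by auto

lemma induced_cycle_induced_iff:
  "induced_cycle W (induced E W) cs \<longleftrightarrow> induced_cycle V E cs \<and> set cs \<subseteq> W" if "W \<subseteq> V"
proof -
  have "cs ! k \<in> W" if "set cs \<subseteq> W" "k < length cs" for k
    using that nth_mem by blast
  moreover have "(i + 1) mod length cs < length cs" if "i < length cs" for i
    using that by (metis gr_implies_not0 mod_less_divisor not_gr_zero)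
  ultimately show ?thesis
    using that unfolding induced_cycle_def is_cycle_def induced_def by (auto dest: nth_mem)
qed

lemma chordal_induced: "chordal V E \<Longrightarrow> W \<subseteq> V \<Longrightarrow> chordal W (induced E W)"
  unfolding chordal_def by (simp add: induced_cycle_induced_iff)

section \<open>Exposed edges and simplicial vertices\<close>

lemma maximal_clique_induced_iff:
  assumes "W \<subseteq> V" and cliques_in_W: "\<And>C. clique V E C \<Longrightarrow> A \<subseteq> C \<Longrightarrow> C \<subseteq> W"
    and "A \<subseteq> K"
  shows "maximal_clique W (induced E W) K \<longleftrightarrow> maximal_clique V E K"
proof -
  have "clique W (induced E W) C \<longleftrightarrow> clique V E C" if "K \<subseteq> C" for C
    using clique_induced_iff[OF \<open>W \<subseteq> V\<close>] cliques_in_W[of C] that \<open>A \<subseteq> K\<close> by auto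
  then show ?thesis
    unfolding maximal_clique_def by blast
qed

lemma exposed_edge_induced_iff:
  assumes "simple_graph V E" "W \<subseteq> V"
    and cliques_in_W: "\<And>C. clique V E C \<Longrightarrow> {a, b} \<subseteq> C \<Longrightarrow> C \<subseteq> W"
  shows "exposed_edge W (induced E W) a b \<longleftrightarrow> exposed_edge V E a b"
proof -
  have "clique V E {a, b}" if "E a b"
    using assms(1) that unfolding simple_graph_def clique_def by auto
  then have edge: "induced E W a b \<longleftrightarrow> E a b"
    using cliques_in_W unfolding induced_def by blast
  have same_max: "maximal_clique W (induced E W) C \<longleftrightarrow> maximal_clique V E C" if "{a, b} \<subseteq> C" for C
    using maximal_clique_induced_iff[OF \<open>W \<subseteq> V\<close> cliques_in_W that] .
  then have "(maximal_clique W (induced E W) C \<and> {a, b} \<subseteq> C) \<longleftrightarrow> (maximal_clique V E C \<and> {a, b} \<subseteq> C)"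
    for C by blast
  then show ?thesis
    unfolding exposed_edge_def facet_edge_def edge same_max[OF order_refl] by simp
qed

lemma exposed_edge_commute:
  assumes "simple_graph V E"
  shows "exposed_edge V E a b \<longleftrightarrow> exposed_edge V E b a"
proof -
  have "E a b \<longleftrightarrow> E b a" using simple_graph_sym[OF assms] by blast
  then show ?thesis unfolding exposed_edge_def facet_edge_def by (simp add: insert_commute)
qed

lemma exposed_edgeD: "exposed_edge V E a b \<Longrightarrow> E a b"
  unfolding exposed_edge_def by blast

lemma exposed_edge_common_neighbour:
  assumes "exposed_edge V E a b"
  obtains z where "z \<in> V" "z \<noteq> a" "z \<noteq> b" "E a z" "E b z"
proof -
  obtain C where "maximal_clique V E C" "{a, b} \<subseteq> C" "C \<noteq> {a, b}"
    using assms unfolding exposed_edge_def facet_edge_def by auto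
  then have C: "clique V E C" "a \<in> C" "b \<in> C" and "\<exists>z\<in>C. z \<noteq> a \<and> z \<noteq> b"
    unfolding maximal_clique_def by auto
  then obtain z where "z \<in> C" "z \<noteq> a" "z \<noteq> b" by blast
  moreover from C \<open>z \<in> C\<close> \<open>z \<noteq> a\<close> \<open>z \<noteq> b\<close> have "z \<in> V" "E a z" "E b z"
    unfolding clique_def by auto
  ultimately show thesis using that by blast
qed

definition simplicial :: "'a set \<Rightarrow> ('a \<Rightarrow> 'a \<Rightarrow> bool) \<Rightarrow> 'a \<Rightarrow> bool" where
  "simplicial V E v \<longleftrightarrow> v \<in> V \<and> (\<forall>p q. E v p \<longrightarrow> E v q \<longrightarrow> p \<noteq> q \<longrightarrow> E p q)"

lemma simplicial_edge_exposed:
  assumes "simple_graph V E" "simplicial V E v" "E v p" "E v q" "p \<noteq> q"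
  shows "exposed_edge V E v p"
proof -
  note Esym = simple_graph_sym[OF assms(1)]
    and Eirr = simple_graph_irrefl[OF assms(1)]
    and EV = simple_graph_edge_in[OF assms(1)]
  define K where "K = insert v {w. E v w}"
  have K: "clique V E K"
    unfolding clique_def
  proof (intro conjI ballI impI)
    show "K \<subseteq> V" using assms(2) EV unfolding K_def simplicial_def by blast
    show "E x y" if "x \<in> K" "y \<in> K" "x \<noteq> y" for x y
      using that assms(2) Esym unfolding K_def simplicial_def by blast
  qed
  have below_K: "C \<subseteq> K" if "clique V E C" "v \<in> C" for C
  proof
    fix w assume "w \<in> C"
    with that show "w \<in> K" unfolding K_def clique_def by (cases "w = v") auto
  qed
  have K_max: "maximal_clique V E K"
    unfolding maximal_clique_def
  proof (intro conjI allI impI)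
    fix D assume "clique V E D \<and> K \<subseteq> D"
    with below_K[of D] show "D = K" unfolding K_def by blast
  qed (rule K)
  have K_unique: "C = K" if "maximal_clique V E C" "v \<in> C" for C
  proof -
    have "C \<subseteq> K" using that below_K unfolding maximal_clique_def by blast
    with that K show "C = K" unfolding maximal_clique_def by blast
  qed
  have "{v, p} \<subseteq> K" "q \<in> K"
    using assms(3,4) unfolding K_def by blast+
  moreover have "q \<noteq> v" using assms(4) Eirr by blast
  ultimately have "K \<noteq> {v, p}"
    using assms(5) by blast
  have "\<exists>!C. maximal_clique V E C \<and> {v, p} \<subseteq> C"
  proof (rule ex1I[of _ K])
    show "maximal_clique V E K \<and> {v, p} \<subseteq> K" using K_max \<open>{v, p} \<subseteq> K\<close> by simp
    show "C = K" if "maximal_clique V E C \<and> {v, p} \<subseteq> C" for C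
      using that K_unique by simp
  qed
  moreover have "\<not> maximal_clique V E {v, p}"
    using K_unique[of "{v, p}"] \<open>K \<noteq> {v, p}\<close> by auto
  ultimately show ?thesis using assms(3) unfolding exposed_edge_def facet_edge_def by simp
qed

lemma exposed_edge_delete_vertex_iff:
  assumes "simple_graph V E" "v \<noteq> a" "v \<noteq> b" "\<not> (E v a \<and> E v b)"
  shows "exposed_edge (V - {v}) (induced E (V - {v})) a b \<longleftrightarrow> exposed_edge V E a b"
proof (rule exposed_edge_induced_iff[OF assms(1)])
  show "C \<subseteq> V - {v}" if "clique V E C" "{a, b} \<subseteq> C" for C
  proof
    fix w assume "w \<in> C"
    have "a \<in> C" "b \<in> C" "C \<subseteq> V" using that unfolding clique_def by auto
    moreover have "v \<notin> C"
      using that(1) \<open>a \<in> C\<close> \<open>b \<in> C\<close> assms(2-4) unfolding clique_def by auto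
    ultimately show "w \<in> V - {v}" using \<open>w \<in> C\<close> by auto
  qed
qed auto

section \<open>Dirac's lemma\<close>

lemma rtranclp_induced_reachable:
  assumes "symp r" "r\<^sup>*\<^sup>* d p" "r\<^sup>*\<^sup>* d q"
  shows "(induced r {w. r\<^sup>*\<^sup>* d w})\<^sup>*\<^sup>* p q"
proof -
  let ?B = "{w. r\<^sup>*\<^sup>* d w}"
  have from_d: "(induced r ?B)\<^sup>*\<^sup>* d w" if "r\<^sup>*\<^sup>* d w" for w
    using that
  proof (induction rule: rtranclp_induct)
    case (step y z)
    then have "induced r ?B y z" unfolding induced_def by auto
    with step.IH show ?case by simp
  qed simp
  have "symp (induced r ?B)"
    using assms(1) unfolding symp_def induced_def by blast
  then have "(induced r ?B)\<^sup>*\<^sup>* p d"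
    using from_d[OF assms(2)] by (meson symp_rtranclp sympD)
  with from_d[OF assms(3)] show ?thesis by simp
qed

lemma component_avoiding_neighbourhood:
  assumes "simple_graph V E" "d \<in> V" "d \<noteq> c" "\<not> E c d"
  obtains B where "d \<in> B" "B \<subseteq> V" "c \<notin> B" "\<And>b. b \<in> B \<Longrightarrow> \<not> E c b"
    "\<And>p q. p \<in> B \<Longrightarrow> q \<in> B \<Longrightarrow> (induced E B)\<^sup>*\<^sup>* p q"
    "\<And>p q. p \<in> B \<Longrightarrow> E p q \<Longrightarrow> q \<notin> B \<Longrightarrow> E c q"
proof -
  note Esym = simple_graph_sym[OF assms(1)]
    and EV = simple_graph_edge_in[OF assms(1)]
  define N where "N = insert c {p. E c p}"
  define r where "r = induced E (- N)"
  define B where "B = {w. r\<^sup>*\<^sup>* d w}"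
  have "d \<in> B" unfolding B_def by simp
  have outside: "w \<in> V - N" if "w \<in> B" for w
  proof -
    have "r\<^sup>*\<^sup>* d w" using that unfolding B_def by simp
    then show ?thesis
      by (cases rule: rtranclp.cases) (use assms EV in \<open>auto simp: r_def N_def induced_def\<close>)
  qed
  have "(induced E B)\<^sup>*\<^sup>* p q" if "p \<in> B" "q \<in> B" for p q
  proof -
    have "symp r" using Esym unfolding symp_def r_def induced_def by blast
    then have "(induced r B)\<^sup>*\<^sup>* p q"
      using rtranclp_induced_reachable that unfolding B_def by fastforce
    moreover have "induced r B \<le> induced E B" unfolding r_def induced_def by auto
    ultimately show ?thesis by (metis rtranclp_mono predicate2D)
  qed
  moreover have "E c q" if "p \<in> B" "E p q" "q \<notin> B" for p q
  proof -
    have "p \<notin> N" using outside that(1) by blast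
    have "q \<in> N"
    proof (rule ccontr)
      assume "q \<notin> N"
      with \<open>p \<notin> N\<close> that(2) have "r p q" unfolding r_def induced_def by simp
      with that(1,3) show False unfolding B_def by (simp add: rtranclp.rtrancl_into_rtrancl)
    qed
    moreover have "q \<noteq> c" using \<open>p \<notin> N\<close> that(2) Esym unfolding N_def by blast
    ultimately show ?thesis unfolding N_def by simp
  qed
  moreover have "B \<subseteq> V" "c \<notin> B" "\<And>b. b \<in> B \<Longrightarrow> \<not> E c b"
    using outside unfolding N_def by auto
  ultimately show thesis using that \<open>d \<in> B\<close> by blast
qed

lemma induced_cycle_path_apex:
  assumes "simple_graph V E" "walk E n f" "0 < n" "inj_on f {..n}"
    and chordless: "\<And>i j. i < j \<Longrightarrow> j \<le> n \<Longrightarrow> E (f i) (f j) \<Longrightarrow> j = Suc i"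
    and "c \<notin> f ` {..n}" "E c (f 0)" "E c (f n)"
    and interior: "\<And>k. 0 < k \<Longrightarrow> k < n \<Longrightarrow> \<not> E c (f k)"
  shows "induced_cycle V E (map (\<lambda>k. if k \<le> n then f k else c) [0..<Suc (Suc n)])"
proof -
  let ?g = "\<lambda>k. if k \<le> n then f k else c"
  note Esym = simple_graph_sym[OF assms(1)]
  have "inj_on ?g {..Suc n}"
    using assms(4,6) unfolding inj_on_def by (auto simp: le_Suc_eq)
  moreover have "walk E (Suc n) ?g"
    using assms(2) Esym[OF assms(8)] unfolding walk_def by (auto simp: less_Suc_eq)
  moreover have "2 \<le> Suc n" "E (?g (Suc n)) (?g 0)" using assms(3,7) by auto
  ultimately have "is_cycle V E (map ?g [0..<Suc (Suc n)])"
    by (intro is_cycle_map_upt_intro[OF assms(1)])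
  moreover have "j = Suc i \<or> (i = 0 \<and> j = Suc n)"
    if "i < j" "j \<le> Suc n" "E (?g i) (?g j)" for i j
  proof (cases "j \<le> n")
    case True
    with that chordless show ?thesis by auto
  next
    case False
    with that have "j = Suc n" "E c (f i)" using Esym by auto
    with that interior[of i] show ?thesis by (cases "i = n") auto
  qed
  ultimately show ?thesis by (rule induced_cycle_map_upt[OF assms(1)])
qed

text \<open>A shortest path from \<open>s\<close> to \<open>t\<close> through \<open>B\<close>, closed up through \<open>c\<close>, is an induced cycle,
  so by chordality it is a triangle.\<close>

lemma separator_clique:
  assumes "simple_graph V E" "chordal V E"
    and "c \<notin> B" "\<And>b. b \<in> B \<Longrightarrow> \<not> E c b"
    and connected: "\<And>p q. p \<in> B \<Longrightarrow> q \<in> B \<Longrightarrow> (induced E B)\<^sup>*\<^sup>* p q"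
    and "E c s" "s \<notin> B" "s' \<in> B" "E s s'"
    and "E c t" "t \<notin> B" "t' \<in> B" "E t t'"
    and "s \<noteq> t"
  shows "E s t"
proof -
  note Esym = simple_graph_sym[OF assms(1)] and Eirr = simple_graph_irrefl[OF assms(1)]
  define W where "W = insert s (insert t B)"
  have "induced E B \<le> induced E W" unfolding W_def induced_def by auto
  then have "(induced E W)\<^sup>*\<^sup>* s' t'"
    using connected[OF \<open>s' \<in> B\<close> \<open>t' \<in> B\<close>] by (metis rtranclp_mono predicate2D)
  moreover have "induced E W s s'" "induced E W t' t"
    using assms(8,9,12) Esym[OF assms(13)] unfolding W_def induced_def by auto
  ultimately have "(induced E W)\<^sup>*\<^sup>* s t"
    by (meson converse_rtranclp_into_rtranclp rtranclp.rtrancl_into_rtrancl)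
  then obtain n f where f: "f 0 = s" "f n = t" "walk (induced E W) n f" "inj_on f {..n}"
    and chordless_W: "\<And>i j. i < j \<Longrightarrow> j \<le> n \<Longrightarrow> induced E W (f i) (f j) \<Longrightarrow> j = Suc i"
    by (rule shortest_walk) blast
  have in_W: "f k \<in> W" if "k \<le> n" for k
    using f(2,3) that unfolding walk_def induced_def W_def
    by (cases "k = n") (auto dest: le_neq_implies_less)
  have interior: "f k \<in> B" if "0 < k" "k < n" for k
    using in_W[of k] f(1,2,4) that unfolding W_def inj_on_def by fastforce
  have "0 < n" using f(1,2) \<open>s \<noteq> t\<close> by (cases n) auto
  have "induced_cycle V E (map (\<lambda>k. if k \<le> n then f k else c) [0..<Suc (Suc n)])"
  proof (rule induced_cycle_path_apex[OF assms(1) _ \<open>0 < n\<close> f(4)])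
    show "walk E n f" using walk_mono[OF f(3)] unfolding induced_def by blast
    show "j = Suc i" if "i < j" "j \<le> n" "E (f i) (f j)" for i j
      using chordless_W that in_W unfolding induced_def by simp
    show "c \<notin> f ` {..n}"
      using in_W assms(3,6,10) Eirr unfolding W_def by fastforce
    show "E c (f 0)" "E c (f n)" using f(1,2) assms(6,10) by simp_all
    show "\<not> E c (f k)" if "0 < k" "k < n" for k
      using interior[OF that] assms(4) by blast
  qed
  then have "n = 1" using assms(2) unfolding chordal_def by fastforce
  with f(1-3) show "E s t" unfolding walk_def induced_def by simp
qed

lemma simplicial_induced_lift:
  assumes "simplicial W (induced E W) v" "W \<subseteq> V" "\<And>p. E v p \<Longrightarrow> p \<in> W"
  shows "simplicial V E v"
  using assms unfolding simplicial_def induced_def by blast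

lemma nonadjacent_pair_adjacent_to_clique:
  assumes "S \<subseteq> W" and S_clique: "\<And>s t. s \<in> S \<Longrightarrow> t \<in> S \<Longrightarrow> s \<noteq> t \<Longrightarrow> E s t"
    and "symp E" "p \<in> W" "q \<in> W" "p \<noteq> q" "\<not> E p q"
  obtains c' d' where "c' \<in> W" "d' \<in> W" "c' \<noteq> d'" "\<not> E c' d'" "\<And>s. s \<in> S \<Longrightarrow> s \<noteq> c' \<Longrightarrow> E c' s"
proof (cases "\<exists>s\<in>S. \<exists>t\<in>W. t \<noteq> s \<and> \<not> E s t")
  case True
  then obtain s t where "s \<in> S" "t \<in> W" "t \<noteq> s" "\<not> E s t" by blast
  with assms(1) S_clique show thesis using that[of s t] by blast
next
  case False
  have "E p s" if "s \<in> S" "s \<noteq> p" for s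
  proof -
    from False that assms(4) have "E s p" by auto
    with assms(3) show ?thesis by (rule sympD)
  qed
  with assms(4-7) show thesis by (rule that)
qed

text \<open>The component \<open>B\<close> of \<open>d\<close> in the graph without the closed neighbourhood of \<open>c\<close> has a
  clique \<open>S\<close> as its boundary. The induction hypothesis, applied to \<open>B \<union> S\<close> and a non-adjacent pair
  chosen by nonadjacent_pair_adjacent_to_clique, gives a simplicial vertex outside \<open>S\<close>; it lies in \<open>B\<close>, where
  neighbourhoods are the same as in the whole graph.\<close>

lemma simplicial_vertex_nonadjacent:
  assumes "simple_graph V E" "chordal V E" "c \<in> V" "d \<in> V" "d \<noteq> c" "\<not> E c d"
  shows "\<exists>v. simplicial V E v \<and> v \<noteq> c \<and> \<not> E c v"
  using assms
proof (induction "card V" arbitrary: V E c d rule: less_induct)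
  case less
  note Esym = simple_graph_sym[OF less.prems(1)]
    and EV = simple_graph_edge_in[OF less.prems(1)]
    and fin = simple_graph_finite[OF less.prems(1)]
  obtain B where B: "d \<in> B" "B \<subseteq> V" "c \<notin> B" "\<And>b. b \<in> B \<Longrightarrow> \<not> E c b"
    and connected: "\<And>p q. p \<in> B \<Longrightarrow> q \<in> B \<Longrightarrow> (induced E B)\<^sup>*\<^sup>* p q"
    and boundary: "\<And>p q. p \<in> B \<Longrightarrow> E p q \<Longrightarrow> q \<notin> B \<Longrightarrow> E c q"
    using component_avoiding_neighbourhood[OF less.prems(1,4-6)] by blast
  define S where "S = {q. q \<notin> B \<and> (\<exists>p\<in>B. E p q)}"
  define W where "W = B \<union> S"
  have S_clique: "E s t" if st: "s \<in> S" "t \<in> S" "s \<noteq> t" for s t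
  proof -
    obtain s' t' where "s' \<in> B" "E s' s" "s \<notin> B" "t' \<in> B" "E t' t" "t \<notin> B"
      using st(1,2) unfolding S_def by blast
    with boundary show ?thesis
      using separator_clique[OF less.prems(1,2) B(3,4) connected _ _ _ _ _ _ _ _ st(3)] Esym by metis
  qed
  have neighbours_in_W: "q \<in> W" if "p \<in> B" "E p q" for p q
    using that unfolding W_def S_def by blast
  have "W \<subseteq> V" "c \<notin> W"
    using B(2-4) EV Esym unfolding W_def S_def by blast+
  with less.prems(3) have "W \<subset> V" by blast
  then have "card W < card V" by (rule psubset_card_mono[OF fin])
  have "\<exists>v\<in>B. simplicial W (induced E W) v"
  proof (cases "\<forall>p\<in>W. \<forall>q\<in>W. p \<noteq> q \<longrightarrow> E p q")
    case True
    then have "simplicial W (induced E W) d"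
      using B(1) unfolding simplicial_def induced_def W_def by blast
    with B(1) show ?thesis by blast
  next
    case False
    then obtain p q where "p \<in> W" "q \<in> W" "p \<noteq> q" "\<not> E p q" by blast
    moreover have "S \<subseteq> W" "symp E" unfolding W_def symp_def using Esym by blast+
    ultimately obtain c' d' where c': "c' \<in> W" "d' \<in> W" "c' \<noteq> d'" "\<not> E c' d'"
      and c'_S: "\<And>s. s \<in> S \<Longrightarrow> s \<noteq> c' \<Longrightarrow> E c' s"
      using nonadjacent_pair_adjacent_to_clique[of S W E] S_clique by metis
    obtain v where v: "simplicial W (induced E W) v" "v \<noteq> c'" "\<not> induced E W c' v"
      using less.hyps[OF \<open>card W < card V\<close> simple_graph_induced[OF less.prems(1) \<open>W \<subseteq> V\<close>]
          chordal_induced[OF less.prems(2) \<open>W \<subseteq> V\<close>] c'(1,2) c'(3)[symmetric]] c'(4)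
      unfolding induced_def by blast
    then have "v \<in> W" unfolding simplicial_def by blast
    with v c'(1) c'_S have "v \<in> B" unfolding W_def induced_def by blast
    with v show ?thesis by blast
  qed
  then obtain v where "v \<in> B" "simplicial W (induced E W) v" by blast
  then have "simplicial V E v"
    using simplicial_induced_lift \<open>W \<subseteq> V\<close> neighbours_in_W by metis
  with \<open>v \<in> B\<close> B(3,4) show ?case by blast
qed

section \<open>Cycles of exposed edges\<close>

lemma simplicial_vertex_avoiding_edge:
  assumes "simple_graph V E" "chordal V E" "E x y" "z \<in> V" "z \<noteq> x" "z \<noteq> y"
  shows "\<exists>v. simplicial V E v \<and> v \<noteq> x \<and> v \<noteq> y"
proof (cases "\<forall>p\<in>V. \<forall>q\<in>V. p \<noteq> q \<longrightarrow> E p q")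
  case True
  from simple_graph_edge_in[OF assms(1)] True assms(4) have "simplicial V E z" unfolding simplicial_def by blast
  with assms(5,6) show ?thesis by blast
next
  case False
  note Esym = simple_graph_sym[OF assms(1)]
  obtain c d where "c \<in> V" "d \<in> V" "d \<noteq> c" "\<not> E c d" using False by blast
  then obtain v where v: "simplicial V E v" "v \<noteq> c" "\<not> E c v"
    using simplicial_vertex_nonadjacent[OF assms(1,2)] by blast
  then have "v \<in> V" "\<not> E v c" using Esym unfolding simplicial_def by blast+
  then obtain w where w: "simplicial V E w" "w \<noteq> v" "\<not> E v w"
    using simplicial_vertex_nonadjacent[OF assms(1,2) _ \<open>c \<in> V\<close>] v(2) by metis
  have "\<not> ({v, w} \<subseteq> {x, y})"
    using assms(3) w(2,3) Esym by auto
  with v(1) w(1) show ?thesis by blast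
qed

lemma simplicial_crossing_exposed_edge:
  assumes "simple_graph V E" "simplicial V E v" "E v p" "E v q" "p \<in> S" "q \<notin> S"
  shows "\<exists>u w. u \<in> S \<and> w \<notin> S \<and> exposed_edge V E u w \<and> (u = v \<or> w = v)"
proof -
  have "p \<noteq> q" using assms(5,6) by blast
  show ?thesis
  proof (cases "v \<in> S")
    case True
    have "exposed_edge V E v q"
      using simplicial_edge_exposed[OF assms(1,2,4,3)] \<open>p \<noteq> q\<close> by blast
    with True assms(6) show ?thesis by blast
  next
    case False
    have "exposed_edge V E p v"
      using simplicial_edge_exposed[OF assms(1-4) \<open>p \<noteq> q\<close>] exposed_edge_commute[OF assms(1)] by blast
    with False assms(5) show ?thesis by blast
  qed
qed

lemma exposed_edge_crossing:
  assumes "simple_graph V E" "chordal V E" "exposed_edge V E x y" "x \<in> S" "y \<notin> S"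
  shows "\<exists>u w. u \<in> S \<and> w \<notin> S \<and> exposed_edge V E u w \<and> (u \<noteq> x \<or> w \<noteq> y)"
  using assms
proof (induction "card V" arbitrary: V E rule: less_induct)
  case less
  note sg = less.prems(1)
  obtain z where "z \<in> V" "z \<noteq> x" "z \<noteq> y"
    using exposed_edge_common_neighbour[OF less.prems(3)] by blast
  moreover note exposed_edgeD[OF less.prems(3)]
  ultimately obtain v where v: "simplicial V E v" "v \<noteq> x" "v \<noteq> y"
    using simplicial_vertex_avoiding_edge[OF sg less.prems(2)] by blast
  have via_v: ?case if "E v p" "E v q" "p \<in> S" "q \<notin> S" for p q
    using simplicial_crossing_exposed_edge[OF sg v(1) that] v(2,3) by blast
  show ?case
  proof (cases "E v x \<and> E v y")
    case True
    with via_v less.prems(4,5) show ?thesis by blast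
  next
    case False
    let ?V = "V - {v}" and ?E = "induced E (V - {v})"
    have "v \<in> V" using v(1) unfolding simplicial_def by blast
    then have "card ?V < card V" by (rule card_Diff1_less[OF simple_graph_finite[OF sg]])
    moreover have "exposed_edge ?V ?E x y"
      using exposed_edge_delete_vertex_iff[OF sg v(2,3) False] less.prems(3) by blast
    ultimately obtain u w where uw: "u \<in> S" "w \<notin> S" "exposed_edge ?V ?E u w" "u \<noteq> x \<or> w \<noteq> y"
      using less.hyps simple_graph_induced[OF sg] chordal_induced[OF less.prems(2)] less.prems(4,5)
      by (metis Diff_subset)
    then have "v \<noteq> u" "v \<noteq> w" unfolding exposed_edge_def induced_def by auto
    show ?thesis
    proof (cases "E v u \<and> E v w")
      case True
      with via_v uw(1,2) show ?thesis by blast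
    next
      case False
      with uw exposed_edge_delete_vertex_iff[OF sg \<open>v \<noteq> u\<close> \<open>v \<noteq> w\<close>] show ?thesis by blast
    qed
  qed
qed

lemma exposed_edges_avoiding_edge_connect:
  assumes "simple_graph V E" "chordal V E" "exposed_edge V E x y"
  shows "(\<lambda>p q. exposed_edge V E p q \<and> {p, q} \<noteq> {x, y})\<^sup>*\<^sup>* x y"
    (is "?R\<^sup>*\<^sup>* x y")
proof (rule ccontr)
  assume "\<not> ?R\<^sup>*\<^sup>* x y"
  then obtain u w where uw: "?R\<^sup>*\<^sup>* x u" "\<not> ?R\<^sup>*\<^sup>* x w" "exposed_edge V E u w" "u \<noteq> x \<or> w \<noteq> y"
    using exposed_edge_crossing[OF assms, of "{w. ?R\<^sup>*\<^sup>* x w}"] by auto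
  have "u \<noteq> y" using uw(1) \<open>\<not> ?R\<^sup>*\<^sup>* x y\<close> by blast
  with uw(4) have "{u, w} \<noteq> {x, y}" by (auto simp: doubleton_eq_iff)
  with uw(1,3) have "?R\<^sup>*\<^sup>* x w" by (simp add: rtranclp.rtrancl_into_rtrancl)
  with uw(2) show False by contradiction
qed

theorem theorem2p12:
  fixes V :: "'a set" and E :: "'a \<Rightarrow> 'a \<Rightarrow> bool" and x y :: 'a
  assumes "simple_graph V E"
    and "chordal V E"
    and "exposed_edge V E x y"
  shows "\<exists>cs. is_cycle V E cs \<and> cycle_edge cs x y
           \<and> (\<forall>u v. cycle_edge cs u v \<longrightarrow> exposed_edge V E u v)"
proof -
  let ?R = "\<lambda>p q. exposed_edge V E p q \<and> {p, q} \<noteq> {x, y}"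
  obtain n f where f: "f 0 = x" "f n = y" "walk ?R n f" "inj_on f {..n}"
    by (rule shortest_walk[OF exposed_edges_avoiding_edge_connect[OF assms]])
  have exposed_walk: "walk (exposed_edge V E) n f" using walk_mono[OF f(3)] by blast
  have "E x y" using exposed_edgeD[OF assms(3)] .
  with f(1,2) simple_graph_irrefl[OF assms(1)] have "n \<noteq> 0" by (cases n) auto
  moreover have "n \<noteq> 1" using f(1-3) unfolding walk_def by auto
  ultimately have "2 \<le> n" by linarith
  have "is_cycle V E (map f [0..<Suc n])"
  proof (rule is_cycle_map_upt_intro[OF assms(1) _ \<open>2 \<le> n\<close> f(4)])
    show "walk E n f" using walk_mono[OF exposed_walk exposed_edgeD] .
    show "E (f n) (f 0)" using f(1,2) simple_graph_sym[OF assms(1) \<open>E x y\<close>] by simp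
  qed
  moreover have "cycle_edge (map f [0..<Suc n]) x y"
    using f(1,2) unfolding cycle_edge_map_upt by (auto simp: insert_commute)
  moreover have "symp (exposed_edge V E)"
    using exposed_edge_commute[OF assms(1)] by (blast intro: sympI)
  then have "exposed_edge V E u v" if "cycle_edge (map f [0..<Suc n]) u v" for u v
    using cycle_edge_map_upt_imp[OF exposed_walk _ _ that] f(1,2) assms(3)
      exposed_edge_commute[OF assms(1)] by blast
  ultimately show ?thesis by blast
qed

end
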